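(* Assume $E\in\mathbb{S}^n_{++}$, $0<\alpha<1$ and $0\ne X\in\partial K_E(\alpha)$. Let $S:=\frac{1}{n-\alpha^2}\big(E^{-1}-\frac{\alpha^2}{\mathrm{tr}(E^{-1}X)}E^{-1}XE^{-1}\big)$ and $q(t):=\mathrm{tr}\big(((E+tX)S)^2\big)$. Then \[ 0<t\le\alpha/\|X\|_E\ \Rightarrow\ q(t)<\frac{1}{n-\alpha^2}\Big(1-2t\,\frac{1-\alpha}{n-\alpha^2}\,\|X\|_E\,\big(\alpha-t\|X\|_E\big)\Big). \]
   Context: $\mathbb{S}^n$ is the space of real symmetric $n\times n$ matrices, $\mathbb{S}^n_{++}$ the positive definite matrices. For $E\in\mathbb{S}^n_{++}$: $\|X\|_E=\mathrm{tr}((E^{-1}X)^2)^{1/2}$, and for $\gamma>0$, $K_E(\gamma)=\{X\in\mathbb{S}^n:\mathrm{tr}(E^{-1}X)\ge\gamma\|X\|_E\}$; $\partial$ denotes boundary. *)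

theory Defs
  imports "HOL-Analysis.Analysis"
begin

text \<open>Symmetric n x n real matrices (the space S^n), index type 'n, n = CARD('n).\<close>
definition sym_mats :: "(real^'n^'n) set" where
  "sym_mats = {A. transpose A = A}"

definition pd_mats :: "(real^'n^'n) set" where
  "pd_mats = {A. A \<in> sym_mats \<and> (\<forall>x. x \<noteq> 0 \<longrightarrow> x \<bullet> (A *v x) > 0)}"

definition normE :: "real^'n^'n \<Rightarrow> real^'n^'n \<Rightarrow> real" where
  "normE E X = sqrt (trace ((matrix_inv E ** X) ** (matrix_inv E ** X)))"

definition coneK :: "real^'n^'n \<Rightarrow> real \<Rightarrow> (real^'n^'n) set" where
  "coneK E \<gamma> = {X \<in> sym_mats. trace (matrix_inv E ** X) \<ge> \<gamma> * normE E X}"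

end

theory Submission
  imports Defs
begin

text \<open>Put \<open>J = X E\<^sup>-\<^sup>1\<close>, \<open>m = \<parallel>X\<parallel>\<^sub>E\<close> and \<open>c = 1/(n - \<alpha>\<^sup>2)\<close>. On the boundary of the cone
  \<open>tr J = \<alpha> m\<close>, and \<open>(E + tX) S = c (I + a J + b J\<^sup>2)\<close> with \<open>a = t - \<alpha>/m \<le> 0\<close> and
  \<open>b = -t\<alpha>/m \<le> 0\<close>, so \<open>q(t)/c\<^sup>2 = n + 2a tr J + (a\<^sup>2 + 2b) tr J\<^sup>2 + 2ab tr J\<^sup>3 + b\<^sup>2 tr J\<^sup>4\<close>.
  Factoring \<open>E\<^sup>-\<^sup>1 = L\<^sup>T L\<close>, the traces of the powers of \<open>J\<close> are those of the symmetric matrix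
  \<open>L X L\<^sup>T\<close>, whose Frobenius norm is \<open>m\<close>; hence \<open>tr J\<^sup>2 = m\<^sup>2\<close>, \<open>tr J\<^sup>3 \<le> m\<^sup>3\<close>, \<open>tr J\<^sup>4 \<le> m\<^sup>4\<close>.
  As \<open>ab \<ge> 0\<close>, \<open>q(t)/c\<^sup>2\<close> is at most a polynomial in \<open>u = tm\<close>, which equals
  \<open>n - \<alpha>\<^sup>2 - 2u(1 - \<alpha>)(\<alpha> - u) - u\<^sup>2(1 - \<alpha>\<^sup>2)\<close>.\<close>

definition quad_form :: "('n::finite \<Rightarrow> 'n \<Rightarrow> real) \<Rightarrow> ('n \<Rightarrow> real) \<Rightarrow> real" where
  "quad_form A x = (\<Sum>i\<in>UNIV. \<Sum>j\<in>UNIV. x i * A i j * x j)"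

lemma quad_form_add_unit:
  assumes "\<And>i j. A i j = A j i"
  shows "quad_form A (\<lambda>i. x i + (if i = p then s else 0))
           = quad_form A x + 2 * s * (\<Sum>j\<in>UNIV. A p j * x j) + s\<^sup>2 * A p p"
proof -
  have expand: "(x i + (if i = p then s else 0)) * A i j * (x j + (if j = p then s else 0))
      = x i * A i j * x j + (if i = p then s * A p j * x j else 0) + (if j = p then s * A p i * x i else 0)
        + (if i = p then if j = p then s\<^sup>2 * A p p else 0 else 0)" for i j
    using assms[of i j] by (auto simp: algebra_simps power2_eq_square)
  have lift: "(\<Sum>j\<in>UNIV. if c then f j else 0) = (if c then sum f UNIV else (0::real))"
    for c and f :: "'n \<Rightarrow> real" by simp
  show ?thesis
    unfolding quad_form_def expand by (simp add: lift sum.distrib sum_distrib_left sum_distrib_right mult_ac)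
qed

lemma quad_form_unit: "quad_form A (\<lambda>i. if i = j then 1 else 0) = A j j"
  unfolding quad_form_def
  by (simp add: if_distrib[of "\<lambda>y. y * z" for z] if_distrib[of "\<lambda>y. z * y" for z] cong: if_cong)

lemma psd_form_zero_diag_row:
  assumes sym: "\<And>i j. A i j = A j i" and psd: "\<And>x. quad_form A x \<ge> 0" and "A p p = 0"
  shows "A p j = 0"
proof -
  define e where "e = (\<lambda>i. if i = j then 1 else (0::real))"
  have "(\<Sum>k\<in>UNIV. A p k * e k) = A p j"
    unfolding e_def by (simp add: if_distrib[of "\<lambda>y. z * y" for z] cong: if_cong)
  then have "0 \<le> A j j + 2 * s * A p j" for s
    using psd[of "\<lambda>i. e i + (if i = p then s else 0)"]
    unfolding quad_form_add_unit[OF sym] quad_form_unit[of A j, folded e_def] \<open>A p p = 0\<close> by simp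
  from this[of "- (A j j + 1) / (2 * A p j)"] show ?thesis
    by (cases "A p j = 0") (auto simp: field_simps)
qed

lemma psd_form_schur_complement:
  assumes sym: "\<And>i j. A i j = A j i" and psd: "\<And>x. quad_form A x \<ge> 0" and d: "A p p > 0"
  shows "quad_form (\<lambda>i j. A i j - A p i * A p j / A p p) x \<ge> 0"
proof -
  define g where "g = (\<Sum>j\<in>UNIV. A p j * x j)"
  have "quad_form (\<lambda>i j. A i j - A p i * A p j / A p p) x = quad_form A x - g\<^sup>2 / A p p"
    unfolding quad_form_def g_def
    by (simp add: algebra_simps sum_subtractf sum_distrib_left sum_distrib_right sum_divide_distrib
        power2_eq_square)
  also have "\<dots> = quad_form A (\<lambda>i. x i + (if i = p then - g / A p p else 0))"
    unfolding quad_form_add_unit[OF sym] g_def[symmetric] using d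
    by (simp add: field_simps power2_eq_square)
  finally show ?thesis using psd by simp
qed

text \<open>Cholesky factorisation, by induction on the support of \<open>A\<close>: a zero pivot forces a zero
  row, and a positive pivot is split off as a rank-one term, leaving the Schur complement.\<close>

lemma psd_form_gram:
  fixes A :: "'n::finite \<Rightarrow> 'n \<Rightarrow> real"
  assumes "finite V" "\<And>i j. A i j = A j i" "\<And>x. quad_form A x \<ge> 0"
    and "\<And>i j. i \<notin> V \<or> j \<notin> V \<Longrightarrow> A i j = 0"
  shows "\<exists>W. \<forall>i j. A i j = (\<Sum>k\<in>V. W k i * W k j)"
  using assms
proof (induction V arbitrary: A rule: finite_induct)
  case empty
  then show ?case by auto
next
  case (insert p V)
  have sym: "\<And>i j. A i j = A j i" and psd: "\<And>x. quad_form A x \<ge> 0"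
    by (fact insert.prems)+
  have "A p p \<ge> 0"
    using psd[of "\<lambda>i. if i = p then 1 else 0"] by (simp add: quad_form_unit)
  then consider "A p p = 0" | "A p p > 0" by linarith
  then show ?case
  proof cases
    case 1
    have "A i j = 0" if "i \<notin> V \<or> j \<notin> V" for i j
      using that insert.prems(3) psd_form_zero_diag_row[OF sym psd 1] sym[of i p]
      by (cases "i = p"; cases "j = p") auto
    then obtain W where W: "\<forall>i j. A i j = (\<Sum>k\<in>V. W k i * W k j)"
      using insert.IH[OF sym psd] by blast
    show ?thesis
      by (rule exI[of _ "\<lambda>k. if k = p then (\<lambda>i. 0) else W k"])
        (use W insert.hyps in \<open>auto intro!: sum.cong\<close>)
  next
    case 2
    define A' where "A' = (\<lambda>i j. A i j - A p i * A p j / A p p)"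
    have sym': "A' i j = A' j i" for i j
      unfolding A'_def using sym by (simp add: mult.commute)
    have psd': "quad_form A' x \<ge> 0" for x
      unfolding A'_def by (rule psd_form_schur_complement[OF sym psd 2])
    have "A' i j = 0" if "i \<notin> V \<or> j \<notin> V" for i j
      using that insert.prems(3) sym[of i p] sym[of j p] 2 unfolding A'_def
      by (cases "i = p"; cases "j = p") auto
    then obtain W where W: "\<forall>i j. A' i j = (\<Sum>k\<in>V. W k i * W k j)"
      using insert.IH[OF sym' psd'] by blast
    define W' where "W' k = (if k = p then (\<lambda>i. A p i / sqrt (A p p)) else W k)" for k
    have "A i j = (\<Sum>k\<in>insert p V. W' k i * W' k j)" for i j
    proof -
      have "A i j = A p i / sqrt (A p p) * (A p j / sqrt (A p p)) + A' i j"
        unfolding A'_def using 2 by (simp add: field_simps)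
      also have "\<dots> = (\<Sum>k\<in>insert p V. W' k i * W' k j)"
        using W insert.hyps by (auto simp: W'_def intro!: sum.cong)
      finally show ?thesis .
    qed
    then show ?thesis by blast
  qed
qed

lemma psd_matrix_gram:
  fixes A :: "real^'n^'n"
  assumes "transpose A = A" and "\<And>x. 0 \<le> x \<bullet> (A *v x)"
  shows "\<exists>L::real^'n^'n. A = transpose L ** L"
proof -
  have sym: "A$i$j = A$j$i" for i j using assms(1) by (metis transpose_def vec_lambda_beta)
  have quad: "quad_form (\<lambda>i j. A$i$j) x = (\<chi> i. x i) \<bullet> (A *v (\<chi> i. x i))" for x
    by (simp add: quad_form_def inner_vec_def matrix_vector_mult_def sum_distrib_left mult_ac)
  have "\<exists>W. \<forall>i j. A$i$j = (\<Sum>k\<in>(UNIV::'n set). W k i * W k j)"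
    using psd_form_gram[of UNIV "\<lambda>i j. A$i$j"] sym assms(2) by (simp add: quad)
  then obtain W where W: "\<forall>i j. A$i$j = (\<Sum>k\<in>(UNIV::'n set). W k i * W k j)" ..
  have "A = transpose (\<chi> k i. W k i) ** (\<chi> k i. W k i)"
    by (simp add: vec_eq_iff matrix_matrix_mult_def transpose_def W)
  then show ?thesis by blast
qed

lemma matrix_add_rdistrib: "((A::real^'n^'m) + B) ** C = A ** C + B ** C"
  by (vector matrix_matrix_mult_def sum.distrib[symmetric] field_simps)

lemma matrix_diff_ldistrib: "(A::real^'n^'m) ** (B - C) = A ** B - A ** C"
  by (vector matrix_matrix_mult_def sum_subtractf[symmetric] field_simps)

lemma trace_scaleR: "trace (k *\<^sub>R (A::real^'n^'n)) = k * trace A"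
  by (simp add: trace_def sum_distrib_left)

lemma trace_mult_transpose: "trace (A ** transpose B) = A \<bullet> (B::real^'n^'m)"
  by (simp add: trace_def matrix_matrix_mult_def transpose_def inner_vec_def)

lemma norm_matrix_mult_le: "norm ((A::real^'n^'m) ** (B::real^'p^'n)) \<le> norm A * norm B"
proof -
  have sq: "(norm M)\<^sup>2 = (\<Sum>i\<in>UNIV. \<Sum>j\<in>UNIV. (M$i$j)\<^sup>2)" for M :: "real^'q^'r"
    unfolding power2_norm_eq_inner by (simp add: inner_vec_def power2_eq_square)
  have "(norm (A ** B))\<^sup>2 = (\<Sum>i\<in>UNIV. \<Sum>j\<in>UNIV. (\<Sum>k\<in>UNIV. A$i$k * B$k$j)\<^sup>2)"
    by (simp add: sq matrix_matrix_mult_def)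
  also have "\<dots> \<le> (\<Sum>i\<in>UNIV. \<Sum>j\<in>UNIV. (\<Sum>k\<in>UNIV. (A$i$k)\<^sup>2) * (\<Sum>k\<in>UNIV. (B$k$j)\<^sup>2))"
    by (intro sum_mono Cauchy_Schwarz_ineq_sum)
  also have "\<dots> = (\<Sum>i\<in>UNIV. \<Sum>k\<in>UNIV. (A$i$k)\<^sup>2) * (\<Sum>j\<in>UNIV. \<Sum>k\<in>UNIV. (B$k$j)\<^sup>2)"
    by (rule sum_product[symmetric])
  also have "\<dots> = (norm A * norm B)\<^sup>2"
    unfolding power_mult_distrib sq using sum.swap[of "\<lambda>k j. (B$k$j)\<^sup>2" UNIV UNIV] by simp
  finally show ?thesis by (rule power2_le_imp_le) simp
qed

lemma trace_square_symmetric: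
  assumes "transpose M = M"
  shows "trace (M ** M) = (norm (M::real^'n^'n))\<^sup>2"
  using trace_mult_transpose[of M M] assms by (simp add: power2_norm_eq_inner)

lemma trace_cube_symmetric_le:
  assumes "transpose M = M"
  shows "trace (M ** M ** M) \<le> norm (M::real^'n^'n) ^ 3"
proof -
  have "trace (M ** M ** M) = M \<bullet> (M ** M)"
    using trace_mult_transpose[of M "M ** M"] assms by (simp add: matrix_transpose_mul matrix_mul_assoc)
  also have "\<dots> \<le> norm M * norm (M ** M)"
    by (rule norm_cauchy_schwarz)
  also have "\<dots> \<le> norm M * (norm M * norm M)"
    by (simp add: mult_left_mono norm_matrix_mult_le)
  finally show ?thesis by (simp add: power3_eq_cube)
qed

lemma trace_fourth_power_symmetric_le:
  assumes "transpose M = M"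
  shows "trace (M ** M ** M ** M) \<le> norm (M::real^'n^'n) ^ 4"
proof -
  have "trace (M ** M ** M ** M) = (norm (M ** M))\<^sup>2"
    using trace_square_symmetric[of "M ** M"] assms by (simp add: matrix_transpose_mul matrix_mul_assoc)
  also have "\<dots> \<le> (norm M * norm M)\<^sup>2"
    by (simp add: power_mono norm_matrix_mult_le)
  finally show ?thesis by (simp add: power2_eq_square power4_eq_xxxx)
qed

lemma trace_cyclic_powers:
  fixes A :: "real^'n^'m" and B :: "real^'m^'n"
  shows "trace ((A ** B) ** (A ** B)) = trace ((B ** A) ** (B ** A))"
    and "trace ((A ** B) ** (A ** B) ** (A ** B)) = trace ((B ** A) ** (B ** A) ** (B ** A))"
    and "trace ((A ** B) ** (A ** B) ** (A ** B) ** (A ** B))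
           = trace ((B ** A) ** (B ** A) ** (B ** A) ** (B ** A))"
proof -
  have "trace (A ** (B ** A ** B)) = trace (B ** A ** B ** A)"
    by (rule trace_mul_sym)
  then show "trace ((A ** B) ** (A ** B)) = trace ((B ** A) ** (B ** A))"
    by (simp only: matrix_mul_assoc)
  have "trace (A ** (B ** A ** B ** A ** B)) = trace (B ** A ** B ** A ** B ** A)"
    by (rule trace_mul_sym)
  then show "trace ((A ** B) ** (A ** B) ** (A ** B)) = trace ((B ** A) ** (B ** A) ** (B ** A))"
    by (simp only: matrix_mul_assoc)
  have "trace (A ** (B ** A ** B ** A ** B ** A ** B)) = trace (B ** A ** B ** A ** B ** A ** B ** A)"
    by (rule trace_mul_sym)
  then show "trace ((A ** B) ** (A ** B) ** (A ** B) ** (A ** B))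
           = trace ((B ** A) ** (B ** A) ** (B ** A) ** (B ** A))"
    by (simp only: matrix_mul_assoc)
qed

lemma invertible_matrix_inv:
  assumes "invertible (A::real^'n^'n)"
  shows "A ** matrix_inv A = mat 1" and "matrix_inv A ** A = mat 1"
  using someI_ex[OF assms[unfolded invertible_def]] by (simp_all add: matrix_inv_def)

lemma pd_mats_pos:
  assumes "E \<in> pd_mats" and "x \<noteq> 0"
  shows "x \<bullet> (E *v x) > 0"
  using assms unfolding pd_mats_def by blast

lemma pd_mats_invertible:
  assumes "E \<in> pd_mats"
  shows "invertible E"
proof -
  have "E *v x = 0 \<Longrightarrow> x = 0" for x
    using pd_mats_pos[OF assms, of x] by force
  then show ?thesis
    using matrix_left_invertible_ker invertible_left_inverse by blast
qed

lemma pd_mats_matrix_inv_symmetric: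
  assumes "E \<in> pd_mats"
  shows "transpose (matrix_inv E) = matrix_inv E"
proof -
  note inv = invertible_matrix_inv[OF pd_mats_invertible[OF assms]]
  have "transpose E = E" using assms by (simp add: pd_mats_def sym_mats_def)
  then have left_inv: "transpose (matrix_inv E) ** E = mat 1"
    using arg_cong[OF inv(1), of transpose] by (simp add: matrix_transpose_mul)
  have "transpose (matrix_inv E) = transpose (matrix_inv E) ** (E ** matrix_inv E)"
    by (simp add: inv(1))
  also have "\<dots> = matrix_inv E"
    by (simp add: matrix_mul_assoc left_inv)
  finally show ?thesis .
qed

lemma pd_mats_matrix_inv_psd:
  assumes "E \<in> pd_mats"
  shows "0 \<le> x \<bullet> (matrix_inv E *v x)"
proof -
  define y where "y = matrix_inv E *v x"
  have "x = E *v y"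
    unfolding y_def by (simp add: matrix_vector_mul_assoc invertible_matrix_inv pd_mats_invertible assms)
  then have "x \<bullet> (matrix_inv E *v x) = y \<bullet> (E *v y)"
    unfolding y_def by (metis inner_commute)
  also have "\<dots> \<ge> 0"
    using pd_mats_pos[OF assms, of y] by (cases "y = 0") simp_all
  finally show ?thesis .
qed

lemma normE_trace_powers:
  fixes E X :: "real^'n^'n"
  assumes "E \<in> pd_mats" and "transpose X = X"
  defines "J \<equiv> X ** matrix_inv E"
  shows "trace (J ** J) = (normE E X)\<^sup>2"
    and "trace (J ** J ** J) \<le> normE E X ^ 3"
    and "trace (J ** J ** J ** J) \<le> normE E X ^ 4"
proof -
  obtain L :: "real^'n^'n" where L: "matrix_inv E = transpose L ** L"
    using psd_matrix_gram pd_mats_matrix_inv_symmetric pd_mats_matrix_inv_psd assms(1) by blast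
  define M where "M = L ** (X ** transpose L)"
  have M_sym: "transpose M = M"
    unfolding M_def using assms(2) by (simp add: matrix_transpose_mul matrix_mul_assoc)
  have J: "J = (X ** transpose L) ** L"
    unfolding J_def L by (simp add: matrix_mul_assoc)
  have tr2: "trace (J ** J) = (norm M)\<^sup>2"
    unfolding J trace_cyclic_powers(1) M_def[symmetric] by (rule trace_square_symmetric[OF M_sym])
  have "normE E X = sqrt (trace (J ** J))"
    unfolding normE_def J_def trace_cyclic_powers(1)[of "matrix_inv E" X] ..
  then have normE: "normE E X = norm M"
    by (simp add: tr2)
  show "trace (J ** J) = (normE E X)\<^sup>2"
    by (simp add: tr2 normE)
  show "trace (J ** J ** J) \<le> normE E X ^ 3"
    unfolding J trace_cyclic_powers(2) M_def[symmetric] normE by (rule trace_cube_symmetric_le[OF M_sym])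
  show "trace (J ** J ** J ** J) \<le> normE E X ^ 4"
    unfolding J trace_cyclic_powers(3) M_def[symmetric] normE
    by (rule trace_fourth_power_symmetric_le[OF M_sym])
qed

lemma coneK_closedin: "closedin (top_of_set sym_mats) (coneK E \<gamma>)"
proof -
  have "closed {Y. \<gamma> * normE E Y \<le> trace (matrix_inv E ** Y)}"
    unfolding normE_def trace_def matrix_matrix_mult_def by (intro closed_Collect_le continuous_intros)
  moreover have "coneK E \<gamma> = sym_mats \<inter> {Y. \<gamma> * normE E Y \<le> trace (matrix_inv E ** Y)}"
    unfolding coneK_def by auto
  ultimately show ?thesis by (simp add: closedin_closed_Int)
qed

lemma frontier_of_coneK:
  assumes "X \<in> (top_of_set sym_mats) frontier_of (coneK E \<gamma>)"
  shows "X \<in> sym_mats" and "trace (matrix_inv E ** X) = \<gamma> * normE E X"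
proof -
  have "X \<in> coneK E \<gamma>"
    using assms frontier_of_subset_closedin[OF coneK_closedin] by blast
  then have X: "X \<in> sym_mats" "\<gamma> * normE E X \<le> trace (matrix_inv E ** X)"
    unfolding coneK_def by auto
  have "open {Y. \<gamma> * normE E Y < trace (matrix_inv E ** Y)}"
    unfolding normE_def trace_def matrix_matrix_mult_def by (intro open_Collect_less continuous_intros)
  then have "sym_mats \<inter> {Y. \<gamma> * normE E Y < trace (matrix_inv E ** Y)}
               \<subseteq> (top_of_set sym_mats) interior_of (coneK E \<gamma>)"
    by (intro interior_of_maximal openin_open_Int) (auto simp: coneK_def)
  then have "\<not> \<gamma> * normE E X < trace (matrix_inv E ** X)"
    using assms X(1) unfolding frontier_of_def by blast
  with X show "X \<in> sym_mats" and "trace (matrix_inv E ** X) = \<gamma> * normE E X"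
    by simp_all
qed

lemma pencil_mult_projected_inverse:
  fixes E Ei X :: "real^'n^'n"
  assumes "E ** Ei = mat 1"
  defines "J \<equiv> X ** Ei"
  shows "(E + t *\<^sub>R X) ** (c *\<^sub>R (Ei - \<beta> *\<^sub>R (Ei ** X ** Ei)))
           = c *\<^sub>R (mat 1 + (t - \<beta>) *\<^sub>R J + (- (t * \<beta>)) *\<^sub>R (J ** J))"
proof -
  have first: "(E + t *\<^sub>R X) ** Ei = mat 1 + t *\<^sub>R J"
    by (simp add: matrix_add_rdistrib assms J_def flip: scalar_matrix_assoc)
  have "(E + t *\<^sub>R X) ** (c *\<^sub>R (Ei - \<beta> *\<^sub>R (Ei ** X ** Ei)))
          = c *\<^sub>R ((E + t *\<^sub>R X) ** Ei - \<beta> *\<^sub>R (((E + t *\<^sub>R X) ** Ei) ** J))"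
    by (simp add: matrix_diff_ldistrib matrix_scalar_ac J_def matrix_mul_assoc scaleR_diff_right
        flip: scalar_matrix_assoc)
  also have "\<dots> = c *\<^sub>R (mat 1 + (t - \<beta>) *\<^sub>R J + (- (t * \<beta>)) *\<^sub>R (J ** J))"
    unfolding first by (simp add: matrix_add_rdistrib algebra_simps flip: scalar_matrix_assoc)
  finally show ?thesis .
qed

lemma trace_square_quadratic:
  fixes J :: "real^'n^'n"
  shows "trace ((mat 1 + a *\<^sub>R J + b *\<^sub>R (J ** J)) ** (mat 1 + a *\<^sub>R J + b *\<^sub>R (J ** J)))
           = real CARD('n) + 2 * a * trace J + (a\<^sup>2 + 2 * b) * trace (J ** J)
             + 2 * a * b * trace (J ** J ** J) + b\<^sup>2 * trace (J ** J ** J ** J)"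
  by (simp add: matrix_add_ldistrib matrix_add_rdistrib matrix_scalar_ac matrix_mul_assoc trace_add
      trace_scaleR trace_I flip: scalar_matrix_assoc)
    (simp add: algebra_simps power2_eq_square)

lemma trace_square_pencil_mult:
  fixes E Ei X :: "real^'n^'n" and c \<beta> t :: real
  assumes "E ** Ei = mat 1"
  defines "S \<equiv> c *\<^sub>R (Ei - \<beta> *\<^sub>R (Ei ** X ** Ei))" and "J \<equiv> X ** Ei"
    and "a \<equiv> t - \<beta>" and "b \<equiv> - (t * \<beta>)"
  shows "trace (((E + t *\<^sub>R X) ** S) ** ((E + t *\<^sub>R X) ** S))
           = c\<^sup>2 * (real CARD('n) + 2 * a * trace J + (a\<^sup>2 + 2 * b) * trace (J ** J)
                     + 2 * a * b * trace (J ** J ** J) + b\<^sup>2 * trace (J ** J ** J ** J))"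
  unfolding S_def pencil_mult_projected_inverse[OF assms(1)] J_def[symmetric] a_def[symmetric]
    b_def[symmetric] trace_square_quadratic[symmetric]
  by (simp add: matrix_scalar_ac trace_scaleR power2_eq_square flip: scalar_matrix_assoc)

lemma trace_polynomial_bound:
  fixes n \<alpha> m t T3 T4 :: real
  assumes n: "1 \<le> n" and \<alpha>: "0 < \<alpha>" "\<alpha> < 1" and m: "0 < m" and t: "0 < t" "t \<le> \<alpha> / m"
    and T3: "T3 \<le> m ^ 3" and T4: "T4 \<le> m ^ 4"
  defines "a \<equiv> t - \<alpha> / m" and "b \<equiv> - (t * (\<alpha> / m))"
  shows "(1 / (n - \<alpha>\<^sup>2))\<^sup>2 * (n + 2 * a * (\<alpha> * m) + (a\<^sup>2 + 2 * b) * m\<^sup>2 + 2 * a * b * T3 + b\<^sup>2 * T4)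
           < 1 / (n - \<alpha>\<^sup>2) * (1 - 2 * t * ((1 - \<alpha>) / (n - \<alpha>\<^sup>2)) * m * (\<alpha> - t * m))"
proof -
  define u where "u = t * m"
  have u: "0 < u" "u \<le> \<alpha>"
    using t m by (simp_all add: u_def field_simps)
  have "\<alpha>\<^sup>2 < 1" using \<alpha> by (simp add: power_less_one_iff)
  then have gap: "n - \<alpha>\<^sup>2 > 0" using n by linarith
  have am: "a * m = u - \<alpha>" and bm: "b * m\<^sup>2 = - (u * \<alpha>)"
    using m by (simp_all add: a_def b_def u_def field_simps power2_eq_square)
  have "a \<le> 0" "b \<le> 0"
    using t \<alpha> m by (simp_all add: a_def b_def)
  then have "a * b \<ge> 0"
    by (rule mult_nonpos_nonpos)
  then have "n + 2 * a * (\<alpha> * m) + (a\<^sup>2 + 2 * b) * m\<^sup>2 + 2 * a * b * T3 + b\<^sup>2 * T4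
      \<le> n + 2 * \<alpha> * (a * m) + (a * m)\<^sup>2 + 2 * (b * m\<^sup>2) + 2 * (a * m) * (b * m\<^sup>2) + (b * m\<^sup>2)\<^sup>2"
    using mult_left_mono[OF T3, of "2 * a * b"] mult_left_mono[OF T4, of "b\<^sup>2"]
    by (simp add: algebra_simps power2_eq_square power3_eq_cube power4_eq_xxxx)
  also have "\<dots> = (n - \<alpha>\<^sup>2) - 2 * u * (1 - \<alpha>) * (\<alpha> - u) - u\<^sup>2 * (1 - \<alpha>\<^sup>2)"
    unfolding am bm by (simp add: algebra_simps power2_eq_square)
  also have "\<dots> < (n - \<alpha>\<^sup>2) - 2 * u * (1 - \<alpha>) * (\<alpha> - u)"
    using u \<open>\<alpha>\<^sup>2 < 1\<close> by simp
  finally have "(1 / (n - \<alpha>\<^sup>2))\<^sup>2 * (n + 2 * a * (\<alpha> * m) + (a\<^sup>2 + 2 * b) * m\<^sup>2 + 2 * a * b * T3 + b\<^sup>2 * T4)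
      < (1 / (n - \<alpha>\<^sup>2))\<^sup>2 * ((n - \<alpha>\<^sup>2) - 2 * u * (1 - \<alpha>) * (\<alpha> - u))"
    using gap by simp
  also have "\<dots> = 1 / (n - \<alpha>\<^sup>2) * (1 - 2 * t * ((1 - \<alpha>) / (n - \<alpha>\<^sup>2)) * m * (\<alpha> - t * m))"
    using gap by (simp add: u_def field_simps power2_eq_square)
  finally show ?thesis .
qed

theorem proposition4p6:
  fixes E X :: "real^'n^'n" and \<alpha> t :: real
  assumes "E \<in> pd_mats"
    and "0 < \<alpha>" and "\<alpha> < 1"
    and "X \<noteq> 0"
    and "X \<in> (top_of_set sym_mats) frontier_of (coneK E \<alpha>)"
    and "0 < t" and "t \<le> \<alpha> / normE E X"
  shows "let n = real CARD('n);
             Ei = matrix_inv E;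
             S = (1 / (n - \<alpha>\<^sup>2)) *\<^sub>R
                   (Ei - (\<alpha>\<^sup>2 / trace (Ei ** X)) *\<^sub>R (Ei ** X ** Ei));
             q = (\<lambda>s. trace (((E + s *\<^sub>R X) ** S) ** ((E + s *\<^sub>R X) ** S)))
         in q t < (1 / (n - \<alpha>\<^sup>2)) *
              (1 - 2 * t * ((1 - \<alpha>) / (n - \<alpha>\<^sup>2)) * normE E X * (\<alpha> - t * normE E X))"
proof -
  define m where "m = normE E X"
  define J where "J = X ** matrix_inv E"
  have X: "transpose X = X" and trX: "trace (matrix_inv E ** X) = \<alpha> * m"
    using frontier_of_coneK[OF assms(5)] by (simp_all add: sym_mats_def m_def)
  have m: "m > 0"
    using less_le_trans[OF assms(6,7)] assms(2) by (simp add: m_def zero_less_divide_iff)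
  have \<beta>: "\<alpha>\<^sup>2 / trace (matrix_inv E ** X) = \<alpha> / m"
    using trX assms(2) m by (simp add: power2_eq_square)
  have trJ: "trace J = \<alpha> * m"
    using trX trace_mul_sym[of X "matrix_inv E"] by (simp add: J_def)
  note traces = normE_trace_powers[OF assms(1) X, folded J_def m_def]
  show ?thesis
    unfolding Let_def \<beta> m_def[symmetric] J_def[symmetric] trJ traces(1)
      trace_square_pencil_mult[OF invertible_matrix_inv(1)[OF pd_mats_invertible[OF assms(1)]]]
    by (rule trace_polynomial_bound) (use assms(2,3,6,7) m traces in \<open>simp_all add: m_def\<close>)
qed

end
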